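(* The Recursive Measure satisfies the added-NO-blocker postulate. For every SVG $\mathcal{G}=(N,\mathcal{W})$ and all $i,j\in N$ with $j$ not a dummy in $\mathcal{G}$: $$\frac{RM'^-_i(\mathcal{G})}{RM'^-_j(\mathcal{G})}=\frac{RM'^-_i(\mathcal{G}^N)}{RM'^-_j(\mathcal{G}^N)}.$$
   Context: A simple voting game (SVG) is a pair $\mathcal{G}=(N,\mathcal{W})$ with $N$ a nonempty finite set of players and $\mathcal{W}\subseteq 2^N$ monotone, $\emptyset\notin\mathcal{W}$, $N\in\mathcal{W}$. Divisions are identified with their YES-sets. Decisiveness and success: - Player $k$ is YES-decisive in $S$ if $k\in S\in\mathcal{W}$ and $S\setminus\{k\}\notin\mathcal{W}$. - Player $k$ is NO-decisive in $S$ if $k\notin S\notin\mathcal{W}$ and $S\cup\{k\}\in\mathcal{W}$. - A dummy is never decisive. - Player $k$ is successful in $S$ if ($k\in S\in\mathcal{W}$) or ($k\notin S\notin\mathcal{W}$). Loyal children: if $S\in\mathcal{W}$, they are the sets $S\setminus\{m\}\in\mathcal{W}$ with $m\in S$. If $S\notin\mathcal{W}$, they are the sets $S\cup\{m\}\notin\mathcal{W}$ with $m\notin S$. Recursive efficacy score $\alpha_k(S)$: - $\alpha_k(S)=1$ if $k$ is decisive; - $\alpha_k(S)=0$ if $k$ is not successful; - otherwise, the average of $\alpha_k$ over the loyal children. For a game with $m$ players, the a priori RM NO-power is $RM'^-_k=2^{-m}\sum_{S\not\ni k}\alpha_k(S)$. For a new player $0\notin N$, the added-NO-blocker game is $\mathcal{G}^N=(N\cup\{0\},\{S\cup\{0\}:S\subseteq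 N\}\cup\mathcal{W})$. *)

theory Defs
  imports Complex_Main
begin

definition svg :: "'a set \<Rightarrow> 'a set set \<Rightarrow> bool" where
  "svg N W \<longleftrightarrow> finite N \<and> N \<noteq> {} \<and> W \<subseteq> Pow N \<and> {} \<notin> W \<and> N \<in> W \<and>
     (\<forall>S T. S \<in> W \<and> S \<subseteq> T \<and> T \<subseteq> N \<longrightarrow> T \<in> W)"

definition yes_decisive :: "'a set set \<Rightarrow> 'a \<Rightarrow> 'a set \<Rightarrow> bool" where
  "yes_decisive W k S \<longleftrightarrow> k \<in> S \<and> S \<in> W \<and> S - {k} \<notin> W"

definition no_decisive :: "'a set set \<Rightarrow> 'a \<Rightarrow> 'a set \<Rightarrow> bool" where
  "no_decisive W k S \<longleftrightarrow> k \<notin> S \<and> S \<notin> W \<and> insert k S \<in> W"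

definition decisive :: "'a set set \<Rightarrow> 'a \<Rightarrow> 'a set \<Rightarrow> bool" where
  "decisive W k S \<longleftrightarrow> yes_decisive W k S \<or> no_decisive W k S"

definition successful :: "'a set set \<Rightarrow> 'a \<Rightarrow> 'a set \<Rightarrow> bool" where
  "successful W k S \<longleftrightarrow> (k \<in> S \<and> S \<in> W) \<or> (k \<notin> S \<and> S \<notin> W)"

definition dummy :: "'a set \<Rightarrow> 'a set set \<Rightarrow> 'a \<Rightarrow> bool" where
  "dummy N W k \<longleftrightarrow> (\<forall>S. S \<subseteq> N \<longrightarrow> \<not> decisive W k S)"

text \<open>Loyal children of S are indexed by m: S - {m} (m \<in> S, S - {m} \<in> W) if S \<in> W,
  and insert m S (m \<in> N - S, insert m S \<notin> W) otherwise; distinct m give distinct children,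
  so averaging over the indices equals averaging over the children.\<close>

text \<open>Recursive efficacy score alpha_k(S); average over loyal children.
  (Guard: value 0 outside the finite setting, which never arises for S \<subseteq> N, N finite.)\<close>
function alpha :: "'a set \<Rightarrow> 'a set set \<Rightarrow> 'a \<Rightarrow> 'a set \<Rightarrow> real" where
  "alpha N W k S =
     (if \<not> finite N \<or> \<not> finite S then 0
      else if decisive W k S then 1
      else if \<not> successful W k S then 0
      else if S \<in> W then
        (\<Sum>m\<in>{m \<in> S. S - {m} \<in> W}. alpha N W k (S - {m})) / card {m \<in> S. S - {m} \<in> W}
      else
        (\<Sum>m\<in>{m \<in> N - S. insert m S \<notin> W}. alpha N W k (insert m S))
          / card {m \<in> N - S. insert m S \<notin> W})"
  by pat_completeness auto
termination
  apply (relation "measure (\<lambda>(N, W, k, S). if S \<in> W then card S else card (N - S))")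
    apply simp
   apply (clarsimp, metis card_gt_0_iff diff_Suc_less empty_iff)
  apply clarsimp
  apply (metis Diff_iff card_gt_0_iff diff_Suc_less empty_iff finite_Diff)
  done

declare alpha.simps [simp del]

definition RM_no :: "'a set \<Rightarrow> 'a set set \<Rightarrow> 'a \<Rightarrow> real" where
  "RM_no N W k = (\<Sum>S\<in>{S. S \<subseteq> N \<and> k \<notin> S}. alpha N W k S) / 2 ^ card N"

definition add_no_blocker :: "'a set \<Rightarrow> 'a set set \<Rightarrow> 'a \<Rightarrow> 'a set set" where
  "add_no_blocker N W z = {insert z S | S. S \<subseteq> N} \<union> W"

end

theory Submission
  imports Defs
begin

text \<open>In the added-NO-blocker game every division containing the blocker z is winning, so a
  player voting NO in it is unsuccessful and scores 0.  On divisions avoiding z the winning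
  sets, the decisiveness conditions and the loyal children are those of the original game
  (the only new candidate child, obtained by adding z, is winning and hence not loyal), so the
  scores agree.  Half of the divisions of the enlarged game contain z, hence every player's
  RM NO-power is exactly halved and all ratios are preserved.\<close>

lemma decisive_imp_successful: "decisive W k S \<Longrightarrow> successful W k S"
  by (auto simp: decisive_def yes_decisive_def no_decisive_def successful_def)

lemma alpha_eq_0_if_not_successful:
  assumes "finite N" "finite S" "\<not> successful W k S"
  shows "alpha N W k S = 0"
  using assms by (subst alpha.simps) (auto dest: decisive_imp_successful)

lemma add_no_blocker_mem_iff:
  assumes "z \<notin> N" "T \<subseteq> N"
  shows "T \<in> add_no_blocker N W z \<longleftrightarrow> T \<in> W"
  using assms unfolding add_no_blocker_def by auto

lemma insert_blocker_mem_add_no_blocker: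
  "S \<subseteq> N \<Longrightarrow> insert z S \<in> add_no_blocker N W z"
  unfolding add_no_blocker_def by blast

lemma alpha_add_no_blocker_blocked:
  assumes "finite N" "S \<subseteq> N" "k \<noteq> z" "k \<notin> S"
  shows "alpha (insert z N) (add_no_blocker N W z) k (insert z S) = 0"
proof (rule alpha_eq_0_if_not_successful)
  show "finite (insert z S)" using assms(1,2) finite_subset by blast
  show "\<not> successful (add_no_blocker N W z) k (insert z S)"
    using assms(2-4) insert_blocker_mem_add_no_blocker by (auto simp: successful_def)
qed (use assms(1) in simp)

lemma alpha_add_no_blocker_eq:
  assumes "finite N" "z \<notin> N" "k \<in> N" "S \<subseteq> N" "k \<notin> S"
  shows "alpha (insert z N) (add_no_blocker N W z) k S = alpha N W k S"
  using assms(4,5)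
proof (induction "card (N - S)" arbitrary: S rule: less_induct)
  case less
  let ?W' = "add_no_blocker N W z"
  let ?C = "{m \<in> N - S. insert m S \<notin> W}"
  have fin: "finite (insert z N)" "finite S" using assms(1) less.prems(1) finite_subset by auto
  have mem_iff: "\<And>T. T \<subseteq> N \<Longrightarrow> T \<in> ?W' \<longleftrightarrow> T \<in> W"
    using add_no_blocker_mem_iff[OF assms(2)] .
  have S_iff: "S \<in> ?W' \<longleftrightarrow> S \<in> W" and kS_iff: "insert k S \<in> ?W' \<longleftrightarrow> insert k S \<in> W"
    using mem_iff less.prems(1) assms(3) by auto
  show ?case
  proof (cases "S \<in> W")
    case True
    then have "\<not> successful ?W' k S" "\<not> successful W k S"
      using S_iff less.prems(2) by (auto simp: successful_def)
    then show ?thesis using fin assms(1) by (simp add: alpha_eq_0_if_not_successful)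
  next
    case False
    have dec: "decisive ?W' k S \<longleftrightarrow> decisive W k S"
      using S_iff kS_iff less.prems(2) by (simp add: decisive_def yes_decisive_def no_decisive_def)
    have suc: "successful ?W' k S \<longleftrightarrow> successful W k S"
      using S_iff by (simp add: successful_def)
    have children: "{m \<in> insert z N - S. insert m S \<notin> ?W'} = ?C"
      using insert_blocker_mem_add_no_blocker[OF less.prems(1)] mem_iff less.prems(1) by auto
    have child_eq: "alpha (insert z N) ?W' k (insert m S) = alpha N W k (insert m S)"
      if m: "m \<in> ?C" for m
    proof (cases "m = k")
      case True
      then have "\<not> successful ?W' k (insert m S)" "\<not> successful W k (insert m S)"
        using m kS_iff by (auto simp: successful_def)
      then show ?thesis using fin assms(1) by (simp add: alpha_eq_0_if_not_successful)
    next
      case False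
      have "card (N - insert m S) < card (N - S)"
        using m assms(1) by (intro psubset_card_mono) auto
      then show ?thesis using less.hyps[of "insert m S"] m False less.prems by auto
    qed
    show ?thesis
      using False S_iff dec suc fin assms(1)
      by (subst (1 2) alpha.simps) (simp only: children sum.cong[OF refl child_eq], simp)
  qed
qed

lemma divisions_insert_split:
  assumes "k \<noteq> z"
  shows "{S. S \<subseteq> insert z N \<and> k \<notin> S}
    = {S. S \<subseteq> N \<and> k \<notin> S} \<union> insert z ` {S. S \<subseteq> N \<and> k \<notin> S}"
proof -
  have "{S. S \<subseteq> insert z N \<and> k \<notin> S} = {S \<in> Pow (insert z N). k \<notin> S}" by auto
  also have "\<dots> = {S. S \<subseteq> N \<and> k \<notin> S} \<union> insert z ` {S. S \<subseteq> N \<and> k \<notin> S}"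
    unfolding Pow_insert using assms by blast
  finally show ?thesis .
qed

lemma RM_no_add_no_blocker:
  assumes "finite N" "z \<notin> N" "k \<in> N"
  shows "RM_no (insert z N) (add_no_blocker N W z) k = RM_no N W k / 2"
proof -
  let ?A = "{S. S \<subseteq> N \<and> k \<notin> S}"
  let ?alpha' = "alpha (insert z N) (add_no_blocker N W z) k"
  have "k \<noteq> z" using assms(2,3) by blast
  have "(\<Sum>S\<in>{S. S \<subseteq> insert z N \<and> k \<notin> S}. ?alpha' S)
      = (\<Sum>S\<in>?A. ?alpha' S) + (\<Sum>S\<in>insert z ` ?A. ?alpha' S)"
    unfolding divisions_insert_split[OF \<open>k \<noteq> z\<close>]
    using assms(1,2) by (intro sum.union_disjoint) auto
  also have "(\<Sum>S\<in>?A. ?alpha' S) = (\<Sum>S\<in>?A. alpha N W k S)"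
    using alpha_add_no_blocker_eq[OF assms] by simp
  also have "(\<Sum>S\<in>insert z ` ?A. ?alpha' S) = 0"
    using alpha_add_no_blocker_blocked[OF assms(1) _ \<open>k \<noteq> z\<close>] by (intro sum.neutral) auto
  finally show ?thesis
    using assms(1,2) by (simp add: RM_no_def)
qed

text \<open>The non-dummy hypothesis only makes the ratios meaningful; since division by 0 yields 0
  in HOL, the equation holds without it.\<close>

theorem lemma4:
  fixes N :: "'a set" and W :: "'a set set" and z i j :: 'a
  assumes "svg N W"
    and "z \<notin> N"
    and "i \<in> N" and "j \<in> N"
    and "\<not> dummy N W j"
  shows "RM_no N W i / RM_no N W j
         = RM_no (insert z N) (add_no_blocker N W z) i / RM_no (insert z N) (add_no_blocker N W z) j"
proof -
  have "finite N" using assms(1) by (simp add: svg_def)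
  then show ?thesis
    using assms(2-4) by (simp add: RM_no_add_no_blocker)
qed

end
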